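(* Let $K\ge 2$ and let $\mathbf{d}_1,\mathbf{d}_2\in\mathbb{R}^K$ be the vector-valued signed distance values at the two endpoints of a segment, both satisfying $\min^{(1)}(\mathbf{d})+\min^{(2)}(\mathbf{d})\ge 0$, and suppose the values along the segment are obtained by linear interpolation, $\mathbf{d}_\alpha=(1-\alpha)\mathbf{d}_1+\alpha\mathbf{d}_2$ for $\alpha\in[0,1]$ (as done by a linearly interpolating meshing algorithm), the surface of object $k$ being located where the $k$-th component vanishes. Then there are at most two object surfaces between the two endpoints, and these surfaces do not cross. Precisely: if neither $\mathbf{d}_1$ nor $\mathbf{d}_2$ has a zero entry, then there are at most two indices $k$ whose components have strictly opposite signs at the two endpoints; and if there are two such indices $i\neq j$, with $(\mathbf{d}_1)_i<0$ and $(\mathbf{d}_2)_j<0$, then the zero-crossing parameters $\alpha_i=\frac{-(\mathbf{d}_1)_i}{(\mathbf{d}_2)_i-(\mathbf{d}_1)_i}$ and $\alpha_j=\frac{-(\mathbf{d}_1)_j}{(\mathbf{d}_2)_j-(\mathbf{d}_1)_j}$ satisfy $\alpha_i\le\alpha_j$ (the surfaces are disjoint or at most touch). If an endpoint vector has a zero entry, then that vector has no negative entry, i.e. that endpoint lies on the surface of one or more objects and outside every other object.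
   Context: For a vector $\mathbf{d}\in\mathbb{R}^K$, $\min^{(n)}(\mathbf{d})$ denotes the $n$-th smallest entry of $\mathbf{d}$ (counted with multiplicity). The $k$-th component of a vector-valued signed distance field is the signed distance to object $k$ (negative inside, positive outside), so object $k$'s surface is its zero set. *)

theory Defs
  imports "HOL-Analysis.Analysis" "HOL-Library.Multiset"
begin

definition entries :: "real ^ 'n \<Rightarrow> real multiset" where
  "entries d = image_mset (\<lambda>i. d $ i) (mset_set UNIV)"

definition min_nth :: "nat \<Rightarrow> real ^ 'n \<Rightarrow> real" where
  "min_nth n d = sorted_list_of_multiset (entries d) ! (n - 1)"

end

theory Submission
  imports Defs
begin

text \<open>The two smallest entries of a vector bound the sum of any two of its entries from below, so
  the hypothesis \<open>0 \<le> min_nth 1 d + min_nth 2 d\<close> says that any two entries of \<open>d\<close> have nonnegative sum.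
  Hence at most one entry is negative, and a zero entry forces all others to be nonnegative.
  A sign change of component \<open>k\<close> between the endpoints needs a negative entry at one of them,
  so there are at most two. For two sign changes \<open>i\<close> (inside to outside) and \<open>j\<close> (outside to
  inside), cross-multiplying turns \<open>\<alpha>\<^sub>i \<le> \<alpha>\<^sub>j\<close> into
  \<open>(-d\<^sub>1\<^sub>i)(-d\<^sub>2\<^sub>j) \<le> d\<^sub>1\<^sub>j d\<^sub>2\<^sub>i\<close>, the product of the two pairwise bounds.\<close>

lemma sorted_nth_0_add_nth_1_le:
  fixes xs :: "'a::linordered_ab_semigroup_add list"
  assumes "sorted xs" and "{#x, y#} \<subseteq># mset xs"
  shows "xs ! 0 + xs ! 1 \<le> x + y"
proof -
  from assms(2) have "size {#x, y#} \<le> length xs"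
    by (metis size_mset size_mset_mono)
  then obtain a b rest where xs: "xs = a # b # rest"
    by (cases xs; cases "tl xs") auto
  have "x \<in> set xs" "y \<in> set xs"
    using mset_subset_eqD[OF assms(2)] by auto
  then have "a \<le> x" "a \<le> y"
    using assms(1) xs by auto
  have "x \<in> set (b # rest) \<or> y \<in> set (b # rest)"
  proof (cases "x = a")
    case True
    then have "{#y#} \<subseteq># mset (b # rest)"
      using assms(2) xs by simp
    then show ?thesis by simp
  next
    case False
    then show ?thesis
      using \<open>x \<in> set xs\<close> xs by auto
  qed
  then have "b \<le> x \<or> b \<le> y"
    using assms(1) xs by auto
  then show ?thesis
  proof
    assume "b \<le> x"
    with \<open>a \<le> y\<close> have "a + b \<le> y + x" by (rule add_mono)
    then show ?thesis using xs by (simp add: add.commute)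
  next
    assume "b \<le> y"
    with \<open>a \<le> x\<close> have "a + b \<le> x + y" by (rule add_mono)
    then show ?thesis using xs by simp
  qed
qed

lemma entries_pair_subset:
  fixes d :: "real ^ 'n"
  assumes "i \<noteq> j"
  shows "{#d $ i, d $ j#} \<subseteq># entries d"
proof -
  have "{#i, j#} \<subseteq># mset_set UNIV"
    using assms by (auto simp: subseteq_mset_def)
  then show ?thesis
    unfolding entries_def
    by (metis image_mset_add_mset image_mset_empty image_mset_subseteq_mono)
qed

lemma min_nth_1_add_min_nth_2_le:
  fixes d :: "real ^ 'n"
  assumes "i \<noteq> j"
  shows "min_nth 1 d + min_nth 2 d \<le> d $ i + d $ j"
  unfolding min_nth_def
  using sorted_nth_0_add_nth_1_le[of "sorted_list_of_multiset (entries d)"]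
    entries_pair_subset[OF assms]
  by simp

lemma pair_sum_nonneg:
  fixes d :: "real ^ 'n"
  assumes "0 \<le> min_nth 1 d + min_nth 2 d" and "i \<noteq> j"
  shows "0 \<le> d $ i + d $ j"
  using assms min_nth_1_add_min_nth_2_le by (metis order_trans)

lemma card_negative_entries_le_1:
  fixes d :: "real ^ 'n"
  assumes "\<And>i j. i \<noteq> j \<Longrightarrow> 0 \<le> d $ i + d $ j"
  shows "card {k. d $ k < 0} \<le> 1"
proof -
  have "x = y" if "d $ x < 0" and "d $ y < 0" for x y
    using assms[of x y] that by force
  then show ?thesis
    by (simp add: card_le_Suc0_iff_eq)
qed

lemma nonneg_if_zero_entry:
  fixes d :: "real ^ 'n"
  assumes "\<And>i j. i \<noteq> j \<Longrightarrow> 0 \<le> d $ i + d $ j" and "d $ l = 0"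
  shows "0 \<le> d $ k"
  using assms(1)[of k l] assms(2) by (cases "k = l") auto

lemma card_sign_changes_le_2:
  fixes d1 d2 :: "real ^ 'n"
  assumes "\<And>i j. i \<noteq> j \<Longrightarrow> 0 \<le> d1 $ i + d1 $ j"
    and "\<And>i j. i \<noteq> j \<Longrightarrow> 0 \<le> d2 $ i + d2 $ j"
  shows "card {k. d1 $ k * d2 $ k < 0} \<le> 2"
proof -
  have "card {k. d1 $ k * d2 $ k < 0} \<le> card ({k. d1 $ k < 0} \<union> {k. d2 $ k < 0})"
    by (rule card_mono) (auto simp: mult_less_0_iff)
  also have "\<dots> \<le> card {k. d1 $ k < 0} + card {k. d2 $ k < 0}"
    by (rule card_Un_le)
  also have "\<dots> \<le> 2"
    using card_negative_entries_le_1[OF assms(1)] card_negative_entries_le_1[OF assms(2)]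
    by simp
  finally show ?thesis .
qed

lemma zero_crossing_le:
  fixes a1 a2 b1 b2 :: real
  assumes "a1 < 0" "0 < a2" "0 < b1" "b2 < 0"
    and "0 \<le> a1 + b1" "0 \<le> a2 + b2"
  shows "- a1 / (a2 - a1) \<le> - b1 / (b2 - b1)"
proof -
  have "(- a1) * (- b2) \<le> b1 * a2"
    using assms by (intro mult_mono) auto
  then show ?thesis
    using assms by (simp add: divide_simps) (simp add: algebra_simps)
qed

theorem mainTheorem4:
  fixes d1 d2 :: "real ^ 'K"
  assumes K2: "CARD('K) \<ge> 2"
    and h1: "min_nth 1 d1 + min_nth 2 d1 \<ge> 0"
    and h2: "min_nth 1 d2 + min_nth 2 d2 \<ge> 0"
  shows "((\<forall>k. d1 $ k \<noteq> 0) \<and> (\<forall>k. d2 $ k \<noteq> 0) \<longrightarrow>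
            card {k. d1 $ k * d2 $ k < 0} \<le> 2 \<and>
            (\<forall>i j. i \<noteq> j \<and> d1 $ i * d2 $ i < 0 \<and> d1 $ j * d2 $ j < 0
                   \<and> d1 $ i < 0 \<and> d2 $ j < 0 \<longrightarrow>
               - d1 $ i / (d2 $ i - d1 $ i) \<le> - d1 $ j / (d2 $ j - d1 $ j)))
       \<and> ((\<exists>k. d1 $ k = 0) \<longrightarrow> (\<forall>k. d1 $ k \<ge> 0))
       \<and> ((\<exists>k. d2 $ k = 0) \<longrightarrow> (\<forall>k. d2 $ k \<ge> 0))"
proof -
  have pair1: "0 \<le> d1 $ i + d1 $ j" if "i \<noteq> j" for i j
    using pair_sum_nonneg[OF h1 that] .
  have pair2: "0 \<le> d2 $ i + d2 $ j" if "i \<noteq> j" for i j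
    using pair_sum_nonneg[OF h2 that] .
  have crossings_ordered: "- d1 $ i / (d2 $ i - d1 $ i) \<le> - d1 $ j / (d2 $ j - d1 $ j)"
    if "i \<noteq> j" "d1 $ i * d2 $ i < 0" "d1 $ j * d2 $ j < 0" "d1 $ i < 0" "d2 $ j < 0" for i j
  proof (rule zero_crossing_le)
    show "0 < d2 $ i" "0 < d1 $ j"
      using that by (auto simp: mult_less_0_iff)
  qed (use that pair1[OF that(1)] pair2[OF that(1)] in auto)
  have zero1: "(\<exists>k. d1 $ k = 0) \<longrightarrow> (\<forall>k. d1 $ k \<ge> 0)"
    using nonneg_if_zero_entry[OF pair1] by blast
  have zero2: "(\<exists>k. d2 $ k = 0) \<longrightarrow> (\<forall>k. d2 $ k \<ge> 0)"
    using nonneg_if_zero_entry[OF pair2] by blast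
  show ?thesis
    using card_sign_changes_le_2[OF pair1 pair2] crossings_ordered zero1 zero2 by blast
qed

end
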